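(* Let $k$ be a positive integer and $G$ a graph. (1) If $G$ contains a Hamiltonian cycle $C$ such that $G-E(C)\in\mathcal{SZ}_k$, then $G\in\mathcal{SC}_k$. (2) If for any two distinct vertices $x,y$ of $G$ there is a Hamiltonian $(x,y)$-path $P_{xy}$ such that $G-E(P_{xy})\in\mathcal{SZ}_k$, then $G\in\mathcal{W}_k$.
   Context: Graphs may have parallel edges but no loops. A $\mathbb{Z}_k$-boundary of $G$ is a map $\beta:V(G)\to\mathbb{Z}_k$ with $\sum_v\beta(v)\equiv0\pmod k$; a $(\mathbb{Z}_k,\beta)$-orientation is an orientation $D$ with $d^+_D(v)-d^-_D(v)\equiv\beta(v)\pmod k$ for all $v$; $G$ is strongly $\mathbb{Z}_k$-connected (written $G\in\mathcal{SZ}_k$) if it has a $(\mathbb{Z}_k,\beta)$-orientation for every $\mathbb{Z}_k$-boundary $\beta$. A $\mathbb{Z}_{2k}$-pc-boundary of $G$ is a map $\beta:V(G)\to\{0,\pm1,\dots,\pm k\}$ with $\beta(v)\equiv d_G(v)\pmod2$ for all $v$ and $\sum_v\beta(v)\equiv0\pmod{2k}$; a $(2k,\beta)$-orientation is an orientation $D$ with $d^+_D(v)-d^-_D(v)\equiv\beta(v)\pmod{2k}$ for all $v$. An orientation is strongly connected if every nonempty proper vertex subset $S$ has $d^+_D(S)>0$ and $d^-_D(S)>0$. $\mathcal{SC}_k$ is the family of graphs having a strongly connected $(2k,\beta)$-orientation for every $\mathbb{Z}_{2k}$-pc-boundary $\beta$. A graph $G$ is a nice supergraph of $H$ if $H\subseteq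 G$ and there are distinct $x,y\in V(H)$ joined by a path in $G-E(H)$. For connected $H\subseteq G$, $G/H$ is obtained by identifying $V(H)$ into a new vertex $w$ and deleting loops; given a $\mathbb{Z}_{2k}$-pc-boundary $\beta$ of $G$, $\beta'$ on $G/H$ is defined by $\beta'(w)\equiv\sum_{v\in V(H)}\beta(v)\pmod{2k}$ (taken in $\{0,\pm1,\dots,\pm k\}$) and $\beta'(v)=\beta(v)$ otherwise. $H\in\mathcal{W}_k$ (weakly contractible) if for every nice supergraph $G$ of $H$ and every $\mathbb{Z}_{2k}$-pc-boundary $\beta$ of $G$, every strongly connected $(2k,\beta')$-orientation of $G/H$ can be extended (by orienting the edges of $H$) to a strongly connected $(2k,\beta)$-orientation of $G$. *)

theory Defs
  imports Main
begin

(* A finite loopless multigraph: vertex set V, edge set E, and endpoint map ends.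
   Parallel edges are allowed (distinct edge names with the same ends). *)
definition mgraph :: "'a set \<Rightarrow> 'e set \<Rightarrow> ('e \<Rightarrow> 'a \<times> 'a) \<Rightarrow> bool" where
  "mgraph V E ends \<longleftrightarrow> finite V \<and> finite E \<and>
     (\<forall>e\<in>E. fst (ends e) \<in> V \<and> snd (ends e) \<in> V \<and> fst (ends e) \<noteq> snd (ends e))"

definition joins :: "('e \<Rightarrow> 'a \<times> 'a) \<Rightarrow> 'e \<Rightarrow> 'a \<Rightarrow> 'a \<Rightarrow> bool" where
  "joins ends e a b \<longleftrightarrow> ends e = (a, b) \<or> ends e = (b, a)"

definition degree :: "'e set \<Rightarrow> ('e \<Rightarrow> 'a \<times> 'a) \<Rightarrow> 'a \<Rightarrow> nat" where
  "degree E ends v = card {e\<in>E. fst (ends e) = v \<or> snd (ends e) = v}"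

(* An orientation is D :: 'e \<Rightarrow> bool; D e = True orients e from fst (ends e) to snd (ends e). *)
definition tailv :: "('e \<Rightarrow> 'a \<times> 'a) \<Rightarrow> ('e \<Rightarrow> bool) \<Rightarrow> 'e \<Rightarrow> 'a" where
  "tailv ends D e = (if D e then fst (ends e) else snd (ends e))"

definition headv :: "('e \<Rightarrow> 'a \<times> 'a) \<Rightarrow> ('e \<Rightarrow> bool) \<Rightarrow> 'e \<Rightarrow> 'a" where
  "headv ends D e = (if D e then snd (ends e) else fst (ends e))"

definition outdeg :: "'e set \<Rightarrow> ('e \<Rightarrow> 'a \<times> 'a) \<Rightarrow> ('e \<Rightarrow> bool) \<Rightarrow> 'a \<Rightarrow> nat" where
  "outdeg E ends D v = card {e\<in>E. tailv ends D e = v}"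

definition indeg :: "'e set \<Rightarrow> ('e \<Rightarrow> 'a \<times> 'a) \<Rightarrow> ('e \<Rightarrow> bool) \<Rightarrow> 'a \<Rightarrow> nat" where
  "indeg E ends D v = card {e\<in>E. headv ends D e = v}"

definition netflow :: "'e set \<Rightarrow> ('e \<Rightarrow> 'a \<times> 'a) \<Rightarrow> ('e \<Rightarrow> bool) \<Rightarrow> 'a \<Rightarrow> int" where
  "netflow E ends D v = int (outdeg E ends D v) - int (indeg E ends D v)"

(* Z_k-boundaries are represented by integer-valued maps (only residues mod k matter). *)
definition SZ :: "nat \<Rightarrow> 'a set \<Rightarrow> 'e set \<Rightarrow> ('e \<Rightarrow> 'a \<times> 'a) \<Rightarrow> bool" where
  "SZ k V E ends \<longleftrightarrow>
     (\<forall>\<beta> :: 'a \<Rightarrow> int. (\<Sum>v\<in>V. \<beta> v) mod int k = 0 \<longrightarrow>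
        (\<exists>D. \<forall>v\<in>V. netflow E ends D v mod int k = \<beta> v mod int k))"

definition pc_boundary :: "nat \<Rightarrow> 'a set \<Rightarrow> 'e set \<Rightarrow> ('e \<Rightarrow> 'a \<times> 'a) \<Rightarrow> ('a \<Rightarrow> int) \<Rightarrow> bool" where
  "pc_boundary k V E ends \<beta> \<longleftrightarrow>
     (\<forall>v\<in>V. - int k \<le> \<beta> v \<and> \<beta> v \<le> int k \<and> \<beta> v mod 2 = int (degree E ends v) mod 2) \<and>
     (\<Sum>v\<in>V. \<beta> v) mod (2 * int k) = 0"

definition orient2k :: "nat \<Rightarrow> 'a set \<Rightarrow> 'e set \<Rightarrow> ('e \<Rightarrow> 'a \<times> 'a) \<Rightarrow> ('a \<Rightarrow> int) \<Rightarrow> ('e \<Rightarrow> bool) \<Rightarrow> bool" where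
  "orient2k k V E ends \<beta> D \<longleftrightarrow>
     (\<forall>v\<in>V. netflow E ends D v mod (2 * int k) = \<beta> v mod (2 * int k))"

definition strongly_conn :: "'a set \<Rightarrow> 'e set \<Rightarrow> ('e \<Rightarrow> 'a \<times> 'a) \<Rightarrow> ('e \<Rightarrow> bool) \<Rightarrow> bool" where
  "strongly_conn V E ends D \<longleftrightarrow>
     (\<forall>S. S \<subseteq> V \<and> S \<noteq> {} \<and> S \<noteq> V \<longrightarrow>
        (\<exists>e\<in>E. tailv ends D e \<in> S \<and> headv ends D e \<notin> S) \<and>
        (\<exists>e\<in>E. headv ends D e \<in> S \<and> tailv ends D e \<notin> S))"

definition SC :: "nat \<Rightarrow> 'a set \<Rightarrow> 'e set \<Rightarrow> ('e \<Rightarrow> 'a \<times> 'a) \<Rightarrow> bool" where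
  "SC k V E ends \<longleftrightarrow>
     (\<forall>\<beta>. pc_boundary k V E ends \<beta> \<longrightarrow>
        (\<exists>D. orient2k k V E ends \<beta> D \<and> strongly_conn V E ends D))"

(* Hamiltonian cycle (edge set C); length 2 cycles use two distinct parallel edges *)
definition ham_cycle :: "'a set \<Rightarrow> 'e set \<Rightarrow> ('e \<Rightarrow> 'a \<times> 'a) \<Rightarrow> 'e set \<Rightarrow> bool" where
  "ham_cycle V E ends C \<longleftrightarrow>
     (\<exists>vs es. 2 \<le> length vs \<and> distinct vs \<and> set vs = V \<and>
        length es = length vs \<and> distinct es \<and> set es \<subseteq> E \<and> set es = C \<and>
        (\<forall>i<length vs. joins ends (es ! i) (vs ! i) (vs ! ((i + 1) mod length vs))))"

definition ham_path :: "'a set \<Rightarrow> 'e set \<Rightarrow> ('e \<Rightarrow> 'a \<times> 'a) \<Rightarrow> 'a \<Rightarrow> 'a \<Rightarrow> 'e set \<Rightarrow> bool" where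
  "ham_path V E ends x y P \<longleftrightarrow>
     (\<exists>vs es. vs \<noteq> [] \<and> distinct vs \<and> set vs = V \<and> hd vs = x \<and> last vs = y \<and>
        length es + 1 = length vs \<and> set es \<subseteq> E \<and> set es = P \<and>
        (\<forall>i<length es. joins ends (es ! i) (vs ! i) (vs ! (i + 1))))"

definition adj :: "'e set \<Rightarrow> ('e \<Rightarrow> 'a \<times> 'a) \<Rightarrow> ('a \<times> 'a) set" where
  "adj F ends = {(a, b). \<exists>e\<in>F. joins ends e a b}"

(* contraction of the vertex set S into the vertex w \<in> S: vertex map, vertex set, edge set, ends *)
definition cmap :: "'a set \<Rightarrow> 'a \<Rightarrow> 'a \<Rightarrow> 'a" where
  "cmap S w v = (if v \<in> S then w else v)"

definition cverts :: "'a set \<Rightarrow> 'a set \<Rightarrow> 'a \<Rightarrow> 'a set" where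
  "cverts VG S w = (VG - S) \<union> {w}"

(* loops created by the identification are deleted *)
definition cedges :: "'e set \<Rightarrow> ('e \<Rightarrow> 'a \<times> 'a) \<Rightarrow> 'a set \<Rightarrow> 'e set" where
  "cedges EG ends S = {e\<in>EG. \<not> (fst (ends e) \<in> S \<and> snd (ends e) \<in> S)}"

definition cends :: "('e \<Rightarrow> 'a \<times> 'a) \<Rightarrow> 'a set \<Rightarrow> 'a \<Rightarrow> 'e \<Rightarrow> 'a \<times> 'a" where
  "cends ends S w e = map_prod (cmap S w) (cmap S w) (ends e)"

(* representative of r mod 2k in {-k+1,...,k} \<subseteq> {0,\<pm>1,...,\<pm>k} *)
definition rep2k :: "nat \<Rightarrow> int \<Rightarrow> int" where
  "rep2k k r = (let m = r mod (2 * int k) in if m > int k then m - 2 * int k else m)"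

definition cbeta :: "nat \<Rightarrow> 'a set \<Rightarrow> 'a \<Rightarrow> ('a \<Rightarrow> int) \<Rightarrow> 'a \<Rightarrow> int" where
  "cbeta k S w \<beta> v = (if v = w then rep2k k (\<Sum>u\<in>S. \<beta> u) else \<beta> v)"

(* Supergraphs G of H = (V,E,ends) are taken with vertex type 'a + nat
   and edge type 'e + nat, H being embedded via Inl; every finite supergraph of H is
   isomorphic (over H) to one of this form. *)
definition WC :: "nat \<Rightarrow> 'a set \<Rightarrow> 'e set \<Rightarrow> ('e \<Rightarrow> 'a \<times> 'a) \<Rightarrow> bool" where
  "WC k V E ends \<longleftrightarrow>
     (\<forall>(VG :: ('a + nat) set) (EG :: ('e + nat) set) endsG.
        mgraph VG EG endsG \<and> Inl ` V \<subseteq> VG \<and> Inl ` E \<subseteq> EG \<and>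
        (\<forall>e\<in>E. endsG (Inl e) = map_prod Inl Inl (ends e)) \<and>
        (\<exists>x\<in>V. \<exists>y\<in>V. x \<noteq> y \<and> (Inl x, Inl y) \<in> (adj (EG - Inl ` E) endsG)\<^sup>*)
      \<longrightarrow>
        (let S = Inl ` V; w = Inl (SOME x. x \<in> V) in
         \<forall>\<beta>. pc_boundary k VG EG endsG \<beta> \<longrightarrow>
           (\<forall>D. orient2k k (cverts VG S w) (cedges EG endsG S) (cends endsG S w) (cbeta k S w \<beta>) D \<and>
                strongly_conn (cverts VG S w) (cedges EG endsG S) (cends endsG S w) D
              \<longrightarrow> (\<exists>D'. (\<forall>e\<in>cedges EG endsG S. D' e = D e) \<and>
                        orient2k k VG EG endsG \<beta> D' \<and> strongly_conn VG EG endsG D'))))"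

end

theory Submission
  imports Defs "HOL-Number_Theory.Cong"
begin

(* For odd k, a (2k,\<beta>)-orientation is just an orientation whose net outflow agrees with \<beta> modulo k:
   modulo 2 the net outflow of a vertex equals its degree, hence agrees with the pc-boundary \<beta>,
   and 2 is coprime to k. For even k the same parity fact shows that no graph with two vertices lies
   in SZ_k, so both statements hold vacuously.

   (1) Orient C cyclically and let G - E(C) \<in> SZ_k realise \<beta> minus the net outflow of C.
   The directed cycle makes the orientation strongly connected.

   (2) Let D be a strongly connected orientation of G/H. Lifting its arcs, every vertex outside H is
   reached from V(H) and reaches V(H). Some y \<in> V(H) reaches some x \<noteq> y in V(H) without using E(H):
   through an edge of G - E(H) joining two vertices of H, or else through lifted arcs, since
   otherwise every vertex would be reached from exactly one vertex of H and this anchor would be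
   constant along the edges of G - E(H), contradicting niceness. Orient a Hamiltonian (x,y)-path of H
   along its direction and the rest of H by SZ_k so that \<beta> is met modulo k at the vertices of H;
   the sum condition holds because the contracted vertex carries the sum of \<beta> over V(H).
   The path and the return walk from y to x connect all of V(H). *)

section \<open>Net outflow\<close>

lemma netflow_eq_sum:
  assumes "finite E"
  shows "netflow E ends D v =
    (\<Sum>e\<in>E. of_bool (tailv ends D e = v) - of_bool (headv ends D e = v))"
  using assms by (simp add: netflow_def outdeg_def indeg_def sum_subtractf Int_def conj_commute)

lemma netflow_cong:
  assumes "\<forall>e\<in>E. D' e = D e"
  shows "netflow E ends D' v = netflow E ends D v"
proof -
  have "{e\<in>E. tailv ends D' e = v} = {e\<in>E. tailv ends D e = v}"
    "{e\<in>E. headv ends D' e = v} = {e\<in>E. headv ends D e = v}"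
    using assms by (auto simp: tailv_def headv_def)
  then show ?thesis by (simp add: netflow_def outdeg_def indeg_def)
qed

lemma netflow_Un:
  assumes "finite A" "finite B" "A \<inter> B = {}"
  shows "netflow (A \<union> B) ends D v = netflow A ends D v + netflow B ends D v"
  using assms by (simp add: netflow_eq_sum sum.union_disjoint)

lemma netflow_not_incident:
  assumes "\<forall>e\<in>E. fst (ends e) \<noteq> v \<and> snd (ends e) \<noteq> v"
  shows "netflow E ends D v = 0"
proof -
  have no_arcs: "{e\<in>E. tailv ends D e = v} = {}" "{e\<in>E. headv ends D e = v} = {}"
    using assms by (auto simp: tailv_def headv_def)
  show ?thesis
    unfolding netflow_def outdeg_def indeg_def no_arcs by simp
qed

lemma sum_netflow:
  assumes "finite E" "finite X"
  shows "(\<Sum>v\<in>X. netflow E ends D v) =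
    (\<Sum>e\<in>E. of_bool (tailv ends D e \<in> X) - of_bool (headv ends D e \<in> X))"
proof -
  have point_mass: "(\<Sum>v\<in>X. of_bool (a = v) :: int) = of_bool (a \<in> X)" for a
    using assms(2) by (simp add: of_bool_def)
  have "(\<Sum>v\<in>X. netflow E ends D v) =
      (\<Sum>v\<in>X. \<Sum>e\<in>E. of_bool (tailv ends D e = v) - of_bool (headv ends D e = v))"
    by (simp only: netflow_eq_sum[OF assms(1)])
  also have "\<dots> = (\<Sum>e\<in>E. \<Sum>v\<in>X. of_bool (tailv ends D e = v) - of_bool (headv ends D e = v))"
    by (rule sum.swap)
  finally show ?thesis
    by (simp only: sum_subtractf point_mass)
qed

lemma sum_netflow_inside:
  assumes "finite E" "finite X" "\<forall>e\<in>E. fst (ends e) \<in> X \<and> snd (ends e) \<in> X"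
  shows "(\<Sum>v\<in>X. netflow E ends D v) = 0"
  unfolding sum_netflow[OF assms(1,2)]
  by (rule sum.neutral) (use assms(3) in \<open>auto simp: tailv_def headv_def\<close>)

lemma netflow_parity:
  assumes "finite E" "\<forall>e\<in>E. fst (ends e) \<noteq> snd (ends e)"
  shows "netflow E ends D v mod 2 = int (degree E ends v) mod 2"
proof -
  let ?O = "{e\<in>E. tailv ends D e = v}" and ?I = "{e\<in>E. headv ends D e = v}"
  have "?O \<union> ?I = {e\<in>E. fst (ends e) = v \<or> snd (ends e) = v}"
    by (auto simp: tailv_def headv_def)
  moreover have "?O \<inter> ?I = {}"
    using assms(2) by (auto simp: tailv_def headv_def split: if_splits)
  ultimately have "degree E ends v = outdeg E ends D v + indeg E ends D v"
    using assms(1) by (simp add: degree_def outdeg_def indeg_def flip: card_Un_disjoint)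
  then have "netflow E ends D v = int (degree E ends v) - 2 * int (indeg E ends D v)"
    by (simp add: netflow_def)
  then show ?thesis by presburger
qed

lemma tailv_image:
  "ends' (f e) = map_prod g g (ends e) \<Longrightarrow> tailv ends' D (f e) = g (tailv ends (D \<circ> f) e)"
  by (simp add: tailv_def split_beta)

lemma headv_image:
  "ends' (f e) = map_prod g g (ends e) \<Longrightarrow> headv ends' D (f e) = g (headv ends (D \<circ> f) e)"
  by (simp add: headv_def split_beta)

lemma netflow_image:
  assumes "finite E" "inj_on f E" "inj g" "\<forall>e\<in>E. ends' (f e) = map_prod g g (ends e)"
  shows "netflow (f ` E) ends' D (g v) = netflow E ends (D \<circ> f) v"
  using assms by (simp add: netflow_eq_sum sum.reindex tailv_image headv_image inj_eq cong: sum.cong)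

lemma tailv_cends: "tailv (cends ends S w) D e = cmap S w (tailv ends D e)"
  by (simp add: tailv_def cends_def split_beta)

lemma headv_cends: "headv (cends ends S w) D e = cmap S w (headv ends D e)"
  by (simp add: headv_def cends_def split_beta)

lemma netflow_cends_outside:
  assumes "v \<notin> S" "w \<in> S"
  shows "netflow E (cends ends S w) D v = netflow E ends D v"
proof -
  have "cmap S w x = v \<longleftrightarrow> x = v" for x
    using assms by (auto simp: cmap_def)
  then show ?thesis by (simp add: netflow_def outdeg_def indeg_def tailv_cends headv_cends)
qed

lemma netflow_cends_center:
  assumes "finite E" "finite S" "w \<in> S"
  shows "netflow E (cends ends S w) D w = (\<Sum>z\<in>S. netflow E ends D z)"
proof -
  have "cmap S w x = w \<longleftrightarrow> x \<in> S" for x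
    using assms(3) by (auto simp: cmap_def)
  then have "netflow E (cends ends S w) D w =
      (\<Sum>e\<in>E. of_bool (tailv ends D e \<in> S) - of_bool (headv ends D e \<in> S))"
    by (simp add: netflow_eq_sum[OF assms(1)] tailv_cends headv_cends)
  then show ?thesis
    by (simp only: sum_netflow[OF assms(1,2)])
qed

lemma netflow_cedges_outside:
  assumes "finite E" "v \<notin> S"
  shows "netflow E ends D v = netflow (cedges E ends S) ends D v"
proof -
  have "E = cedges E ends S \<union> (E - cedges E ends S)"
    by (auto simp: cedges_def)
  moreover have "netflow (E - cedges E ends S) ends D v = 0"
    using assms(2) by (intro netflow_not_incident) (auto simp: cedges_def)
  ultimately show ?thesis
    using assms(1) netflow_Un[of "cedges E ends S" "E - cedges E ends S" ends D v]
    by (simp add: cedges_def)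
qed

section \<open>Boundaries modulo k and 2k\<close>

lemma mod_double_eq_if_odd:
  fixes a b :: int
  assumes "odd k" "a mod int k = b mod int k" "a mod 2 = b mod 2"
  shows "a mod (2 * int k) = b mod (2 * int k)"
  using coprime_cong_mult[of a b 2 "int k"] assms by (simp add: cong_def)

lemma rep2k_mod: "rep2k k r mod (2 * int k) = r mod (2 * int k)"
  by (simp add: rep2k_def Let_def)

lemma mod_eq_if_mod_double_eq:
  fixes a b :: int
  shows "a mod (2 * int k) = b mod (2 * int k) \<Longrightarrow> a mod int k = b mod int k"
  using cong_modulus_mult[of a b "int k" 2] by (simp add: cong_def mult.commute)

lemma orient2k_if_mod_k:
  assumes "odd k" "mgraph V E ends" "pc_boundary k V E ends \<beta>"
    and "\<forall>v\<in>V. netflow E ends D v mod int k = \<beta> v mod int k"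
  shows "orient2k k V E ends \<beta> D"
  unfolding orient2k_def
proof
  fix v assume "v \<in> V"
  moreover have "netflow E ends D v mod 2 = int (degree E ends v) mod 2"
    using assms(2) by (intro netflow_parity) (auto simp: mgraph_def)
  ultimately show "netflow E ends D v mod (2 * int k) = \<beta> v mod (2 * int k)"
    using assms(1,3,4) by (intro mod_double_eq_if_odd) (auto simp: pc_boundary_def)
qed

lemma mgraph_Diff: "mgraph V E ends \<Longrightarrow> mgraph V (E - F) ends"
  by (auto simp: mgraph_def)

lemma SZ_even_at_most_one_vertex:
  assumes "even k" "mgraph V E ends" "SZ k V E ends" "a \<in> V" "b \<in> V"
  shows "a = b"
proof (rule ccontr)
  assume "a \<noteq> b"
  define c where "c = int (degree E ends a) + 1"
  define \<beta> where "\<beta> v = (if v = a then c else 0) - (if v = b then c else 0)" for v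
  have "finite V" using assms(2) by (simp add: mgraph_def)
  then have "(\<Sum>v\<in>V. \<beta> v) = 0"
    using assms(4,5) by (simp add: \<beta>_def sum_subtractf)
  then obtain D where "\<forall>v\<in>V. netflow E ends D v mod int k = \<beta> v mod int k"
    using assms(3)[unfolded SZ_def, rule_format, of \<beta>] by auto
  then have "netflow E ends D a mod int k = c mod int k"
    using assms(4) \<open>a \<noteq> b\<close> by (simp add: \<beta>_def)
  moreover have "(2::int) dvd int k"
    using assms(1) by simp
  ultimately have "netflow E ends D a mod 2 = c mod 2"
    by (metis mod_mod_cancel)
  moreover have "netflow E ends D a mod 2 = int (degree E ends a) mod 2"
    using assms(2) by (intro netflow_parity) (auto simp: mgraph_def)
  ultimately have "int (degree E ends a) mod 2 = (int (degree E ends a) + 1) mod 2"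
    unfolding c_def by linarith
  then show False
    by presburger
qed

section \<open>Reachability\<close>

text \<open>Equivalent to the existence of a directed walk from a to b; the cut form spares us walks.\<close>

definition reaches :: "'e set \<Rightarrow> ('e \<Rightarrow> 'a \<times> 'a) \<Rightarrow> ('e \<Rightarrow> bool) \<Rightarrow> 'a \<Rightarrow> 'a \<Rightarrow> bool" where
  "reaches E ends D a b \<longleftrightarrow>
     (\<forall>T. a \<in> T \<longrightarrow> b \<notin> T \<longrightarrow> (\<exists>e\<in>E. tailv ends D e \<in> T \<and> headv ends D e \<notin> T))"

lemma reaches_refl: "reaches E ends D a a"
  by (simp add: reaches_def)

lemma reaches_trans:
  assumes "reaches E ends D a b" "reaches E ends D b c"
  shows "reaches E ends D a c"
  unfolding reaches_def
proof (intro allI impI)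
  fix T assume "a \<in> T" "c \<notin> T"
  then show "\<exists>e\<in>E. tailv ends D e \<in> T \<and> headv ends D e \<notin> T"
    using assms unfolding reaches_def by (cases "b \<in> T") auto
qed

lemma reaches_arc: "e \<in> E \<Longrightarrow> reaches E ends D (tailv ends D e) (headv ends D e)"
  unfolding reaches_def by auto

lemma reaches_arc_agree:
  assumes "e \<in> E" "D e = D' e"
  shows "reaches E ends D (tailv ends D' e) (headv ends D' e)"
  using reaches_arc[OF assms(1), of ends D] assms(2) by (simp add: tailv_def headv_def)

lemma reaches_mono: "reaches E ends D a b \<Longrightarrow> E \<subseteq> E' \<Longrightarrow> reaches E' ends D a b"
  unfolding reaches_def by (meson subsetD)

lemma reaches_cong:
  assumes "\<forall>e\<in>E. D' e = D e"
  shows "reaches E ends D' a b \<longleftrightarrow> reaches E ends D a b"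
proof -
  have "tailv ends D' e = tailv ends D e \<and> headv ends D' e = headv ends D e" if "e \<in> E" for e
    using assms that by (simp add: tailv_def headv_def)
  then show ?thesis
    unfolding reaches_def by (metis (no_types, lifting))
qed

lemma reaches_converse: "reaches E ends (\<lambda>e. \<not> D e) a b \<longleftrightarrow> reaches E ends D b a"
proof -
  have flip: "tailv ends (\<lambda>e. \<not> D e) e = headv ends D e"
    "headv ends (\<lambda>e. \<not> D e) e = tailv ends D e" for e
    by (simp_all add: tailv_def headv_def)
  show ?thesis
    unfolding reaches_def flip
  proof (intro iffI allI impI)
    fix T assume L: "\<forall>T. a \<in> T \<longrightarrow> b \<notin> T \<longrightarrow> (\<exists>e\<in>E. headv ends D e \<in> T \<and> tailv ends D e \<notin> T)"
      and T: "b \<in> T" "a \<notin> T"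
    show "\<exists>e\<in>E. tailv ends D e \<in> T \<and> headv ends D e \<notin> T"
      using L[rule_format, of "- T"] T by auto
  next
    fix T assume R: "\<forall>T. b \<in> T \<longrightarrow> a \<notin> T \<longrightarrow> (\<exists>e\<in>E. tailv ends D e \<in> T \<and> headv ends D e \<notin> T)"
      and T: "a \<in> T" "b \<notin> T"
    show "\<exists>e\<in>E. headv ends D e \<in> T \<and> tailv ends D e \<notin> T"
      using R[rule_format, of "- T"] T by auto
  qed
qed

lemma reaches_image:
  assumes "\<forall>e\<in>E. ends' (f e) = map_prod g g (ends e)" "reaches E ends (D \<circ> f) a b"
  shows "reaches (f ` E) ends' D (g a) (g b)"
  unfolding reaches_def
proof (intro allI impI)
  fix T assume "g a \<in> T" "g b \<notin> T"
  then have "a \<in> g -` T" "b \<notin> g -` T"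
    by auto
  then obtain e where "e \<in> E" "tailv ends (D \<circ> f) e \<in> g -` T" "headv ends (D \<circ> f) e \<notin> g -` T"
    using assms(2)[unfolded reaches_def, rule_format, of "g -` T"] by blast
  then show "\<exists>e\<in>f ` E. tailv ends' D e \<in> T \<and> headv ends' D e \<notin> T"
    using assms(1) by (auto simp: tailv_image headv_image)
qed

lemma reaches_chain:
  assumes "\<forall>i. Suc i < length vs \<longrightarrow> reaches E ends D (vs ! i) (vs ! Suc i)" "i \<le> j" "j < length vs"
  shows "reaches E ends D (vs ! i) (vs ! j)"
  using assms(2,3)
proof (induction j rule: dec_induct)
  case base
  show ?case by (rule reaches_refl)
next
  case (step j)
  then show ?case using assms(1) reaches_trans by fastforce
qed

lemma reaches_all_if_cyclic:
  assumes "\<forall>i<length vs. reaches E ends D (vs ! i) (vs ! ((i + 1) mod length vs))"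
  shows "\<forall>a\<in>set vs. \<forall>b\<in>set vs. reaches E ends D a b"
proof (intro ballI)
  fix a b assume "a \<in> set vs" "b \<in> set vs"
  then obtain i j where ij: "i < length vs" "vs ! i = a" "j < length vs" "vs ! j = b"
    by (meson in_set_conv_nth)
  define n where "n = length vs"
  have steps: "\<forall>i. Suc i < length vs \<longrightarrow> reaches E ends D (vs ! i) (vs ! Suc i)"
  proof (intro allI impI)
    fix i assume "Suc i < length vs"
    then show "reaches E ends D (vs ! i) (vs ! Suc i)"
      using assms[rule_format, of i] by simp
  qed
  have "reaches E ends D (vs ! i) (vs ! (n - 1))"
    using ij by (intro reaches_chain[OF steps]) (auto simp: n_def)
  moreover have "reaches E ends D (vs ! (n - 1)) (vs ! 0)"
  proof -
    have "n - 1 < n" "n - 1 + 1 = n"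
      using ij by (auto simp: n_def)
    then show ?thesis
      using assms[rule_format, of "n - 1"] by (simp add: n_def)
  qed
  moreover have "reaches E ends D (vs ! 0) (vs ! j)"
    using ij by (intro reaches_chain[OF steps]) auto
  ultimately show "reaches E ends D a b"
    using ij reaches_trans by metis
qed

lemma strongly_conn_iff_reaches:
  assumes "\<forall>e\<in>E. fst (ends e) \<in> V \<and> snd (ends e) \<in> V"
  shows "strongly_conn V E ends D \<longleftrightarrow> (\<forall>a\<in>V. \<forall>b\<in>V. reaches E ends D a b)"
proof
  assume sc: "strongly_conn V E ends D"
  show "\<forall>a\<in>V. \<forall>b\<in>V. reaches E ends D a b"
    unfolding reaches_def
  proof (intro ballI allI impI)
    fix a b T assume "a \<in> V" "b \<in> V" "a \<in> T" "b \<notin> T"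
    then have "T \<inter> V \<subseteq> V \<and> T \<inter> V \<noteq> {} \<and> T \<inter> V \<noteq> V"
      by blast
    then obtain e where "e \<in> E" "tailv ends D e \<in> T \<inter> V" "headv ends D e \<notin> T \<inter> V"
      using sc unfolding strongly_conn_def by blast
    moreover have "headv ends D e \<in> V"
      using assms \<open>e \<in> E\<close> by (simp add: headv_def)
    ultimately show "\<exists>e\<in>E. tailv ends D e \<in> T \<and> headv ends D e \<notin> T"
      by blast
  qed
next
  assume all: "\<forall>a\<in>V. \<forall>b\<in>V. reaches E ends D a b"
  show "strongly_conn V E ends D"
    unfolding strongly_conn_def
  proof (intro allI impI conjI)
    fix S assume "S \<subseteq> V \<and> S \<noteq> {} \<and> S \<noteq> V"
    then obtain a b where "a \<in> S" "b \<in> V - S" "a \<in> V"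
      by blast
    then have ab: "reaches E ends D a b" and ba: "reaches E ends D b a"
      using all by auto
    show "\<exists>e\<in>E. tailv ends D e \<in> S \<and> headv ends D e \<notin> S"
      using ab[unfolded reaches_def, rule_format, of S] \<open>a \<in> S\<close> \<open>b \<in> V - S\<close> by blast
    show "\<exists>e\<in>E. headv ends D e \<in> S \<and> tailv ends D e \<notin> S"
      using ba[unfolded reaches_def, rule_format, of "- S"] \<open>a \<in> S\<close> \<open>b \<in> V - S\<close> by blast
  qed
qed

section \<open>Orienting Hamiltonian cycles and paths\<close>

lemma orientation_along:
  assumes "distinct es" "\<forall>i<length es. joins ends (es ! i) (a i) (b i)"
  obtains D where "\<forall>i<length es. tailv ends D (es ! i) = a i \<and> headv ends D (es ! i) = b i"
proof -
  define D where "D e \<longleftrightarrow> (\<exists>i<length es. es ! i = e \<and> ends e = (a i, b i))" for e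
  have "tailv ends D (es ! i) = a i \<and> headv ends D (es ! i) = b i" if i: "i < length es" for i
  proof (cases "ends (es ! i) = (a i, b i)")
    case True
    then have "D (es ! i)"
      using i by (auto simp: D_def)
    then show ?thesis
      using True by (simp add: tailv_def headv_def)
  next
    case False
    have "j = i" if "j < length es" "es ! j = es ! i" for j
      using assms(1) i that by (simp add: nth_eq_iff_index_eq)
    then have "\<not> D (es ! i)"
      using False by (auto simp: D_def)
    moreover have "ends (es ! i) = (b i, a i)"
      using False assms(2) i unfolding joins_def by blast
    ultimately show ?thesis
      by (simp add: tailv_def headv_def)
  qed
  then show thesis
    by (intro that) blast
qed

lemma distinct_path_edges:
  assumes "distinct vs" "length es + 1 = length vs"
    and "\<forall>i<length es. joins ends (es ! i) (vs ! i) (vs ! (i + 1))"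
  shows "distinct es"
  unfolding distinct_conv_nth
proof (intro allI impI)
  fix i j assume ij: "i < length es" "j < length es" "i \<noteq> j"
  show "es ! i \<noteq> es ! j"
  proof
    assume "es ! i = es ! j"
    then have "joins ends (es ! i) (vs ! i) (vs ! (i + 1))" "joins ends (es ! i) (vs ! j) (vs ! (j + 1))"
      using assms(3) ij by auto
    then have "vs ! i = vs ! j \<or> vs ! i = vs ! (j + 1) \<and> vs ! (i + 1) = vs ! j"
      by (auto simp: joins_def)
    then show False
      using assms(1,2) ij by (auto simp: nth_eq_iff_index_eq)
  qed
qed

lemma SZ_extend_orientation:
  assumes "SZ k V (E - A) ends" "finite V" "finite E" "A \<subseteq> E"
    and "\<forall>e\<in>A. fst (ends e) \<in> V \<and> snd (ends e) \<in> V" "(\<Sum>v\<in>V. \<gamma> v) mod int k = 0"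
  obtains D where "\<forall>e\<in>A. D e = DA e" "\<forall>v\<in>V. netflow E ends D v mod int k = \<gamma> v mod int k"
proof -
  have finA: "finite A"
    using assms(3,4) by (rule finite_subset[rotated])
  have "(\<Sum>v\<in>V. netflow A ends DA v) = 0"
    using finA assms(2,5) by (rule sum_netflow_inside)
  then have "(\<Sum>v\<in>V. \<gamma> v - netflow A ends DA v) mod int k = 0"
    using assms(6) by (simp add: sum_subtractf)
  then have "\<exists>R. \<forall>v\<in>V. netflow (E - A) ends R v mod int k = (\<gamma> v - netflow A ends DA v) mod int k"
    by (rule assms(1)[unfolded SZ_def, rule_format])
  then obtain R where R: "\<forall>v\<in>V. netflow (E - A) ends R v mod int k = (\<gamma> v - netflow A ends DA v) mod int k"
    by blast
  define D where "D e = (if e \<in> A then DA e else R e)" for e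
  have "netflow E ends D v = netflow A ends DA v + netflow (E - A) ends R v" for v
  proof -
    have "netflow E ends D v = netflow A ends D v + netflow (E - A) ends D v"
      using netflow_Un[of A "E - A" ends D v] finA assms(3,4) by (simp add: Un_absorb1)
    also have "\<dots> = netflow A ends DA v + netflow (E - A) ends R v"
      using netflow_cong[of A D DA ends v] netflow_cong[of "E - A" D R ends v] by (simp add: D_def)
    finally show ?thesis .
  qed
  then have "\<forall>v\<in>V. netflow E ends D v mod int k = \<gamma> v mod int k"
    using R by (metis add_diff_cancel_left' diff_add_cancel mod_add_right_eq)
  then show thesis
    by (intro that) (simp_all add: D_def)
qed

lemma ham_cycle_orientation:
  assumes "mgraph V E ends" "ham_cycle V E ends C" "SZ k V (E - C) ends"
    and "(\<Sum>v\<in>V. \<gamma> v) mod int k = 0"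
  obtains D where "\<forall>v\<in>V. netflow E ends D v mod int k = \<gamma> v mod int k" "strongly_conn V E ends D"
proof -
  obtain vs es where vs: "set vs = V" "length es = length vs"
    and es: "distinct es" "set es \<subseteq> E" "set es = C"
    and joined: "\<forall>i<length vs. joins ends (es ! i) (vs ! i) (vs ! ((i + 1) mod length vs))"
    using assms(2) unfolding ham_cycle_def by blast
  let ?next = "\<lambda>i. vs ! ((i + 1) mod length vs)"
  obtain DC where DC: "\<forall>i<length es. tailv ends DC (es ! i) = vs ! i \<and> headv ends DC (es ! i) = ?next i"
    using orientation_along[OF es(1), of ends "\<lambda>i. vs ! i" ?next] joined vs(2) by metis
  have G: "finite V" "finite E" "\<forall>e\<in>E. fst (ends e) \<in> V \<and> snd (ends e) \<in> V"
    using assms(1) by (auto simp: mgraph_def)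
  obtain D where D: "\<forall>e\<in>C. D e = DC e" "\<forall>v\<in>V. netflow E ends D v mod int k = \<gamma> v mod int k"
    using SZ_extend_orientation[OF assms(3) G(1,2) _ _ assms(4)] es(2,3) G(3) by blast
  have "\<forall>i<length vs. reaches E ends D (vs ! i) (?next i)"
  proof (intro allI impI)
    fix i assume "i < length vs"
    then have "es ! i \<in> C"
      using es(3) vs(2) by auto
    then show "reaches E ends D (vs ! i) (?next i)"
      using reaches_arc_agree[of "es ! i" E D DC ends] D(1) DC es(2,3) \<open>i < length vs\<close> vs(2) by auto
  qed
  then have "strongly_conn V E ends D"
    using reaches_all_if_cyclic strongly_conn_iff_reaches[OF G(3)] vs(1) by metis
  then show thesis
    by (rule that[OF D(2)])
qed

lemma ham_path_orientation:
  assumes "mgraph V E ends" "ham_path V E ends x y P" "SZ k V (E - P) ends"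
    and "(\<Sum>v\<in>V. \<gamma> v) mod int k = 0"
  obtains D where "\<forall>v\<in>V. netflow E ends D v mod int k = \<gamma> v mod int k"
    "\<forall>v\<in>V. reaches E ends D x v \<and> reaches E ends D v y"
proof -
  obtain vs es where vs: "vs \<noteq> []" "distinct vs" "set vs = V" "hd vs = x" "last vs = y"
    and es: "length es + 1 = length vs" "set es \<subseteq> E" "set es = P"
    and joined: "\<forall>i<length es. joins ends (es ! i) (vs ! i) (vs ! (i + 1))"
    using assms(2) unfolding ham_path_def by blast
  obtain DP where DP: "\<forall>i<length es. tailv ends DP (es ! i) = vs ! i \<and> headv ends DP (es ! i) = vs ! (i + 1)"
    using orientation_along[OF distinct_path_edges[OF vs(2) es(1) joined], of ends "\<lambda>i. vs ! i" "\<lambda>i. vs ! (i + 1)"]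
      joined by metis
  have G: "finite V" "finite E" "\<forall>e\<in>E. fst (ends e) \<in> V \<and> snd (ends e) \<in> V"
    using assms(1) by (auto simp: mgraph_def)
  obtain D where D: "\<forall>e\<in>P. D e = DP e" "\<forall>v\<in>V. netflow E ends D v mod int k = \<gamma> v mod int k"
    using SZ_extend_orientation[OF assms(3) G(1,2) _ _ assms(4)] es(2,3) G(3) by blast
  have steps: "\<forall>i. Suc i < length vs \<longrightarrow> reaches E ends D (vs ! i) (vs ! Suc i)"
  proof (intro allI impI)
    fix i assume "Suc i < length vs"
    then have "i < length es" "es ! i \<in> P"
      using es(1,3) by auto
    then show "reaches E ends D (vs ! i) (vs ! Suc i)"
      using reaches_arc_agree[of "es ! i" E D DP ends] D(1) DP es(2,3) by auto
  qed
  have "x = vs ! 0" "y = vs ! (length vs - 1)"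
    using vs(1,4,5) by (simp_all add: hd_conv_nth last_conv_nth)
  have "reaches E ends D x v \<and> reaches E ends D v y" if "v \<in> V" for v
  proof -
    obtain j where "j < length vs" "vs ! j = v"
      using \<open>v \<in> V\<close> vs(3) by (metis in_set_conv_nth)
    then show ?thesis
      using reaches_chain[OF steps, of 0 j] reaches_chain[OF steps, of j "length vs - 1"]
        \<open>x = vs ! 0\<close> \<open>y = vs ! (length vs - 1)\<close> by simp
  qed
  then show thesis
    by (intro that[OF D(2)]) blast
qed

lemma SC_if_ham_cycle:
  assumes "odd k" "mgraph V E ends" "ham_cycle V E ends C" "SZ k V (E - C) ends"
  shows "SC k V E ends"
  unfolding SC_def
proof (intro allI impI)
  fix \<beta> assume pc: "pc_boundary k V E ends \<beta>"
  then have "(\<Sum>v\<in>V. \<beta> v) mod int k = 0"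
    using mod_eq_if_mod_double_eq[of "sum \<beta> V" k 0] by (simp add: pc_boundary_def)
  then obtain D where "\<forall>v\<in>V. netflow E ends D v mod int k = \<beta> v mod int k"
    and "strongly_conn V E ends D"
    by (rule ham_cycle_orientation[OF assms(2-4)])
  then show "\<exists>D. orient2k k V E ends \<beta> D \<and> strongly_conn V E ends D"
    using orient2k_if_mod_k[OF assms(1,2) pc] by blast
qed

lemma ham_cycle_has_two_vertices:
  assumes "ham_cycle V E ends C"
  obtains x y where "x \<in> V" "y \<in> V" "x \<noteq> y"
proof -
  obtain vs where vs: "2 \<le> length vs" "distinct vs" "set vs = V"
    using assms unfolding ham_cycle_def by blast
  then have "0 < length vs" "1 < length vs"
    by auto
  then have "vs ! 0 \<in> V" "vs ! 1 \<in> V" "vs ! 0 \<noteq> vs ! 1"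
    using nth_mem vs(3) nth_eq_iff_index_eq[OF vs(2)] by (blast, blast, simp)
  then show thesis
    by (rule that)
qed

section \<open>Lifting orientations of a contraction\<close>

lemma reaches_lift_into:
  assumes "w \<in> S" "q \<notin> S" "reaches E (cends ends S w) D q w"
  shows "\<exists>s\<in>S. reaches E ends D q s"
proof (rule ccontr)
  assume none: "\<not> (\<exists>s\<in>S. reaches E ends D q s)"
  define T where "T = {v. reaches E ends D q v}"
  have "q \<in> T" "w \<notin> T"
    using none assms(1) by (auto simp: T_def reaches_refl)
  then obtain e where e: "e \<in> E" "tailv (cends ends S w) D e \<in> T" "headv (cends ends S w) D e \<notin> T"
    using assms(3)[unfolded reaches_def, rule_format, of T] by blast
  have "tailv ends D e \<in> T"
    using e(2) \<open>w \<notin> T\<close> by (auto simp: tailv_cends cmap_def split: if_splits)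
  then have "reaches E ends D q (tailv ends D e)"
    by (simp add: T_def)
  then have "reaches E ends D q (headv ends D e)"
    by (rule reaches_trans[OF _ reaches_arc[OF e(1)]])
  moreover from this have "headv ends D e \<notin> S"
    using none by blast
  ultimately show False
    using e(3) by (simp add: headv_cends cmap_def T_def)
qed

lemma reaches_lift_from:
  assumes "w \<in> S" "q \<notin> S" "reaches E (cends ends S w) D w q"
  shows "\<exists>s\<in>S. reaches E ends D s q"
  using reaches_lift_into[of w S q E ends "\<lambda>e. \<not> D e"] assms by (simp add: reaches_converse)

locale contraction =
  fixes V :: "'a set" and E :: "'e set" and ends :: "'e \<Rightarrow> 'a \<times> 'a"
    and S :: "'a set" and w :: 'a and D :: "'e \<Rightarrow> bool"
  assumes mgraph: "mgraph V E ends" and S_subset: "S \<subseteq> V" and w_in: "w \<in> S"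
    and strongly_conn_contracted: "strongly_conn (cverts V S w) (cedges E ends S) (cends ends S w) D"
begin

lemma reaches_contracted:
  assumes "a \<in> cverts V S w" "b \<in> cverts V S w"
  shows "reaches (cedges E ends S) (cends ends S w) D a b"
proof -
  have "fst (cends ends S w e) = cmap S w (fst (ends e))" "snd (cends ends S w e) = cmap S w (snd (ends e))"
    for e by (simp_all add: cends_def map_prod_def split_beta)
  moreover have "cmap S w v \<in> cverts V S w" if "v \<in> V" for v
    using that by (simp add: cmap_def cverts_def)
  ultimately have "\<forall>e\<in>cedges E ends S.
      fst (cends ends S w e) \<in> cverts V S w \<and> snd (cends ends S w e) \<in> cverts V S w"
    using mgraph by (simp add: cedges_def mgraph_def)
  then have "\<forall>a\<in>cverts V S w. \<forall>b\<in>cverts V S w. reaches (cedges E ends S) (cends ends S w) D a b"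
    using strongly_conn_iff_reaches strongly_conn_contracted by blast
  then show ?thesis
    using assms by blast
qed

lemma reaches_into_S:
  assumes "q \<in> V"
  obtains s where "s \<in> S" "reaches (cedges E ends S) ends D q s"
proof (cases "q \<in> S")
  case True
  then show thesis
    by (rule that[OF _ reaches_refl])
next
  case False
  have "q \<in> cverts V S w" "w \<in> cverts V S w"
    using assms False by (auto simp: cverts_def)
  then have "\<exists>s\<in>S. reaches (cedges E ends S) ends D q s"
    by (intro reaches_lift_into[OF w_in False] reaches_contracted)
  then show thesis
    using that by blast
qed

lemma reaches_from_S:
  assumes "q \<in> V"
  obtains s where "s \<in> S" "reaches (cedges E ends S) ends D s q"
proof (cases "q \<in> S")
  case True
  then show thesis
    by (rule that[OF _ reaches_refl])
next
  case False
  have "q \<in> cverts V S w" "w \<in> cverts V S w"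
    using assms False by (auto simp: cverts_def)
  then have "\<exists>s\<in>S. reaches (cedges E ends S) ends D s q"
    by (intro reaches_lift_from[OF w_in False] reaches_contracted)
  then show thesis
    using that by blast
qed

lemma anchor_exists:
  assumes "\<forall>a\<in>S. \<forall>b\<in>S. reaches (cedges E ends S) ends D a b \<longrightarrow> a = b"
  obtains anchor where "\<forall>s\<in>S. anchor s = s"
    "\<And>u v. u \<in> V \<Longrightarrow> v \<in> V \<Longrightarrow> reaches (cedges E ends S) ends D u v \<Longrightarrow> anchor u = anchor v"
proof -
  let ?R = "reaches (cedges E ends S) ends D"
  define anchor where "anchor z = (SOME s. s \<in> S \<and> ?R s z)" for z
  have anchor: "anchor z \<in> S \<and> ?R (anchor z) z" if "z \<in> V" for z
    unfolding anchor_def by (rule someI_ex) (meson reaches_from_S[OF that])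
  have anchor_unique: "anchor z = s" if "z \<in> V" "s \<in> S" "?R s z" for z s
  proof -
    obtain s' where s': "s' \<in> S" "?R z s'"
      using reaches_into_S[OF \<open>z \<in> V\<close>] by blast
    have "s = s'"
      using assms \<open>s \<in> S\<close> s'(1) reaches_trans[OF \<open>?R s z\<close> s'(2)] by blast
    moreover have "anchor z = s'"
      using anchor[OF \<open>z \<in> V\<close>] assms s'(1) reaches_trans[OF _ s'(2)] by blast
    ultimately show ?thesis
      by simp
  qed
  show thesis
  proof (rule that)
    show "\<forall>s\<in>S. anchor s = s"
      using anchor_unique[OF _ _ reaches_refl] S_subset by blast
    fix u v assume "u \<in> V" "v \<in> V" "?R u v"
    then show "anchor u = anchor v"
      using anchor_unique[OF \<open>v \<in> V\<close>] anchor[OF \<open>u \<in> V\<close>] reaches_trans[OF _ \<open>?R u v\<close>]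
      by (metis (no_types))
  qed
qed

lemma distinct_reaching_pair:
  assumes "\<forall>e\<in>E - EH. \<not> (fst (ends e) \<in> S \<and> snd (ends e) \<in> S)"
    and "x \<in> S" "y \<in> S" "x \<noteq> y" "(x, y) \<in> (adj (E - EH) ends)\<^sup>*"
  shows "\<exists>a\<in>S. \<exists>b\<in>S. a \<noteq> b \<and> reaches (cedges E ends S) ends D a b"
proof (rule ccontr)
  assume "\<not> ?thesis"
  then obtain anchor where fixed: "\<forall>s\<in>S. anchor s = s"
    and const: "\<And>u v. u \<in> V \<Longrightarrow> v \<in> V \<Longrightarrow> reaches (cedges E ends S) ends D u v \<Longrightarrow> anchor u = anchor v"
    using anchor_exists by blast
  have adj_step: "anchor u = anchor v" if uv: "(u, v) \<in> adj (E - EH) ends" for u v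
  proof -
    obtain e where e: "e \<in> E - EH" "joins ends e u v"
      using uv unfolding adj_def by blast
    then have "e \<in> cedges E ends S"
      using assms(1) by (simp add: cedges_def)
    then have "reaches (cedges E ends S) ends D (tailv ends D e) (headv ends D e)"
      by (rule reaches_arc)
    then have "reaches (cedges E ends S) ends D u v \<or> reaches (cedges E ends S) ends D v u"
      using e(2) by (auto simp: joins_def tailv_def headv_def split: if_splits)
    moreover have "u \<in> V" "v \<in> V"
      using mgraph e by (auto simp: mgraph_def joins_def)
    ultimately show ?thesis
      using const by metis
  qed
  have "anchor x = anchor z" if "(x, z) \<in> (adj (E - EH) ends)\<^sup>*" for z
    using that by (induction rule: rtrancl_induct) (auto dest: adj_step)
  then show False
    using assms(2-5) fixed by auto
qed

lemma return_orientation: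
  assumes "\<forall>e\<in>EH. fst (ends e) \<in> S \<and> snd (ends e) \<in> S"
    and "x \<in> S" "y \<in> S" "x \<noteq> y" "(x, y) \<in> (adj (E - EH) ends)\<^sup>*"
  obtains a b D0 where "a \<in> S" "b \<in> S" "a \<noteq> b" "\<forall>e\<in>cedges E ends S. D0 e = D e"
    "reaches (E - EH) ends D0 a b"
proof (cases "\<exists>f\<in>E - EH. fst (ends f) \<in> S \<and> snd (ends f) \<in> S")
  case True
  then obtain f where f: "f \<in> E - EH" "fst (ends f) \<in> S" "snd (ends f) \<in> S"
    by blast
  \<comment> \<open>f is a loop of the contraction, so D leaves it free\<close>
  have "fst (ends f) \<noteq> snd (ends f)"
    using mgraph f(1) by (auto simp: mgraph_def)
  moreover have "\<forall>e\<in>cedges E ends S. (D(f := True)) e = D e"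
    using f by (auto simp: cedges_def)
  moreover have "reaches (E - EH) ends (D(f := True)) (fst (ends f)) (snd (ends f))"
    using reaches_arc[OF f(1), of ends "D(f := True)"] by (simp add: tailv_def headv_def)
  ultimately show thesis
    by (rule that[OF f(2,3)])
next
  case False
  then have "\<forall>e\<in>E - EH. \<not> (fst (ends e) \<in> S \<and> snd (ends e) \<in> S)"
    by blast
  then obtain a b where ab: "a \<in> S" "b \<in> S" "a \<noteq> b" "reaches (cedges E ends S) ends D a b"
    using distinct_reaching_pair[OF _ assms(2-5)] by blast
  have "reaches (E - EH) ends D a b"
    by (rule reaches_mono[OF ab(4)]) (use assms(1) in \<open>auto simp: cedges_def\<close>)
  then show thesis
    by (intro that[OF ab(1-3)]) simp_all
qed

lemma sum_boundary_contracted: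
  assumes "orient2k k (cverts V S w) (cedges E ends S) (cends ends S w) (cbeta k S w \<beta>) D"
    and "\<forall>e\<in>cedges E ends S. D0 e = D e" "\<forall>e\<in>EH. fst (ends e) \<in> S \<and> snd (ends e) \<in> S"
  shows "(\<Sum>z\<in>S. \<beta> z - netflow (E - EH) ends D0 z) mod (2 * int k) = 0"
proof -
  let ?Ec = "cedges E ends S"
  have fin: "finite E" "finite S" "finite ?Ec"
    using mgraph S_subset finite_subset by (auto simp: mgraph_def cedges_def)
  have split: "E - EH = ?Ec \<union> (E - EH - ?Ec)" "?Ec \<inter> (E - EH - ?Ec) = {}"
    using assms(3) by (auto simp: cedges_def)
  have inside: "\<forall>e\<in>E - EH - ?Ec. fst (ends e) \<in> S \<and> snd (ends e) \<in> S"
    by (auto simp: cedges_def)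
  have "(\<Sum>z\<in>S. netflow (E - EH) ends D0 z) =
      (\<Sum>z\<in>S. netflow ?Ec ends D0 z) + (\<Sum>z\<in>S. netflow (E - EH - ?Ec) ends D0 z)"
    using netflow_Un[of ?Ec "E - EH - ?Ec" ends D0] split fin by (simp add: sum.distrib)
  also have "\<dots> = (\<Sum>z\<in>S. netflow ?Ec ends D0 z)"
    using sum_netflow_inside[of "E - EH - ?Ec" S ends D0] inside fin by simp
  also have "\<dots> = (\<Sum>z\<in>S. netflow ?Ec ends D z)"
    by (rule sum.cong[OF refl netflow_cong[OF assms(2)]])
  also have "\<dots> = netflow ?Ec (cends ends S w) D w"
    using netflow_cends_center[OF fin(3,2) w_in] by simp
  also have "\<dots> mod (2 * int k) = cbeta k S w \<beta> w mod (2 * int k)"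
    using assms(1) by (simp add: orient2k_def cverts_def)
  also have "\<dots> = (\<Sum>z\<in>S. \<beta> z) mod (2 * int k)"
    by (simp add: cbeta_def rep2k_mod)
  finally have "2 * int k dvd (\<Sum>z\<in>S. \<beta> z) - (\<Sum>z\<in>S. netflow (E - EH) ends D0 z)"
    by (metis mod_eq_dvd_iff)
  then show ?thesis
    by (simp add: sum_subtractf)
qed

lemma orient2k_lift:
  assumes "odd k" "pc_boundary k V E ends \<beta>"
    and "orient2k k (cverts V S w) (cedges E ends S) (cends ends S w) (cbeta k S w \<beta>) D"
    and "\<forall>e\<in>cedges E ends S. D' e = D e"
    and "\<forall>z\<in>S. netflow E ends D' z mod int k = \<beta> z mod int k"
  shows "orient2k k V E ends \<beta> D'"
proof (rule orient2k_if_mod_k[OF assms(1) mgraph assms(2)], intro ballI)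
  fix z assume "z \<in> V"
  show "netflow E ends D' z mod int k = \<beta> z mod int k"
  proof (cases "z \<in> S")
    case True
    then show ?thesis
      using assms(5) by blast
  next
    case False
    have "finite E"
      using mgraph by (simp add: mgraph_def)
    then have "netflow E ends D' z = netflow (cedges E ends S) ends D' z"
      by (rule netflow_cedges_outside[OF _ False])
    also have "\<dots> = netflow (cedges E ends S) ends D z"
      by (rule netflow_cong[OF assms(4)])
    also have "\<dots> = netflow (cedges E ends S) (cends ends S w) D z"
      by (rule netflow_cends_outside[OF False w_in, symmetric])
    finally have "netflow E ends D' z = netflow (cedges E ends S) (cends ends S w) D z" .
    moreover have "z \<in> cverts V S w" "z \<noteq> w"
      using \<open>z \<in> V\<close> False w_in by (auto simp: cverts_def)
    then have "netflow (cedges E ends S) (cends ends S w) D z mod (2 * int k) = \<beta> z mod (2 * int k)"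
      using assms(3) by (simp add: orient2k_def cbeta_def)
    ultimately show ?thesis
      using mod_eq_if_mod_double_eq by metis
  qed
qed

lemma strongly_conn_lift:
  assumes "\<forall>e\<in>cedges E ends S. D' e = D e" "\<forall>a\<in>S. \<forall>b\<in>S. reaches E ends D' a b"
  shows "strongly_conn V E ends D'"
proof -
  have lift: "reaches E ends D' u v" if "reaches (cedges E ends S) ends D u v" for u v
  proof -
    have "reaches (cedges E ends S) ends D' u v"
      unfolding reaches_cong[OF assms(1)] by (rule that)
    then show ?thesis
      by (rule reaches_mono) (auto simp: cedges_def)
  qed
  have "reaches E ends D' a b" if "a \<in> V" "b \<in> V" for a b
  proof -
    obtain s where s: "s \<in> S" "reaches (cedges E ends S) ends D a s"
      using reaches_into_S[OF \<open>a \<in> V\<close>] .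
    obtain s' where s': "s' \<in> S" "reaches (cedges E ends S) ends D s' b"
      using reaches_from_S[OF \<open>b \<in> V\<close>] .
    have "reaches E ends D' s s'"
      using assms(2) s(1) s'(1) by blast
    then show ?thesis
      by (rule reaches_trans[OF reaches_trans[OF lift[OF s(2)]] lift[OF s'(2)]])
  qed
  moreover have "\<forall>e\<in>E. fst (ends e) \<in> V \<and> snd (ends e) \<in> V"
    using mgraph by (simp add: mgraph_def)
  ultimately show ?thesis
    using strongly_conn_iff_reaches by blast
qed

end

section \<open>Weak contractibility\<close>

definition glue :: "'e set \<Rightarrow> ('e \<Rightarrow> bool) \<Rightarrow> ('e + 'f \<Rightarrow> bool) \<Rightarrow> 'e + 'f \<Rightarrow> bool" where
  "glue E DH D0 e = (if e \<in> Inl ` E then DH (projl e) else D0 e)"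

lemma netflow_glue:
  assumes "finite E" "finite EG" "Inl ` E \<subseteq> EG" "\<forall>h\<in>E. endsG (Inl h) = map_prod Inl Inl (ends h)"
  shows "netflow EG endsG (glue E DH D0) (Inl u) =
    netflow (EG - Inl ` E) endsG D0 (Inl u) + netflow E ends DH u"
proof -
  have "netflow ((EG - Inl ` E) \<union> Inl ` E) endsG (glue E DH D0) (Inl u) =
      netflow (EG - Inl ` E) endsG (glue E DH D0) (Inl u) + netflow (Inl ` E) endsG (glue E DH D0) (Inl u)"
    by (rule netflow_Un) (use assms(1,2) in auto)
  moreover have "(EG - Inl ` E) \<union> Inl ` E = EG"
    using assms(3) by blast
  ultimately have "netflow EG endsG (glue E DH D0) (Inl u) =
      netflow (EG - Inl ` E) endsG (glue E DH D0) (Inl u) + netflow (Inl ` E) endsG (glue E DH D0) (Inl u)"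
    by simp
  also have "netflow (EG - Inl ` E) endsG (glue E DH D0) (Inl u) = netflow (EG - Inl ` E) endsG D0 (Inl u)"
    by (rule netflow_cong) (simp add: glue_def)
  also have "netflow (Inl ` E) endsG (glue E DH D0) (Inl u) = netflow E ends (glue E DH D0 \<circ> Inl) u"
    using assms(1,4) by (intro netflow_image) (auto simp: inj_on_def)
  also have "\<dots> = netflow E ends DH u"
    by (rule netflow_cong) (simp add: glue_def)
  finally show ?thesis .
qed

lemma reaches_glue:
  assumes "Inl ` E \<subseteq> EG" "\<forall>h\<in>E. endsG (Inl h) = map_prod Inl Inl (ends h)"
    and "reaches E ends DH a b"
  shows "reaches EG endsG (glue E DH D0) (Inl a) (Inl b)"
proof -
  have agree: "\<forall>h\<in>E. (glue E DH D0 \<circ> Inl) h = DH h"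
    by (simp add: glue_def)
  have "reaches E ends (glue E DH D0 \<circ> Inl) a b"
    by (subst reaches_cong[OF agree]) (rule assms(3))
  then have "reaches (Inl ` E) endsG (glue E DH D0) (Inl a) (Inl b)"
    by (rule reaches_image[where f = Inl and g = Inl, OF assms(2)])
  then show ?thesis
    by (rule reaches_mono[OF _ assms(1)])
qed

locale embedded_contraction = contraction VG EG endsG "Inl ` V" w D
  for VG :: "('a + 'b) set" and EG :: "('e + 'f) set" and endsG V w D +
  fixes E :: "'e set" and ends :: "'e \<Rightarrow> 'a \<times> 'a"
  assumes mgraph_H: "mgraph V E ends" and edges_H: "Inl ` E \<subseteq> EG"
    and ends_H: "\<forall>e\<in>E. endsG (Inl e) = map_prod Inl Inl (ends e)"
begin

lemma edges_H_inside: "\<forall>e\<in>Inl ` E. fst (endsG e) \<in> Inl ` V \<and> snd (endsG e) \<in> Inl ` V"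
  using ends_H mgraph_H by (auto simp: mgraph_def)

lemma glue_agrees:
  assumes "\<forall>e\<in>cedges EG endsG (Inl ` V). D0 e = D e"
  shows "\<forall>e\<in>cedges EG endsG (Inl ` V). glue E DH D0 e = D e"
proof -
  have "cedges EG endsG (Inl ` V) \<subseteq> EG - Inl ` E"
    using edges_H_inside by (auto simp: cedges_def)
  then show ?thesis
    using assms by (auto simp: glue_def)
qed

lemma orient2k_glue:
  assumes "odd k" "pc_boundary k VG EG endsG \<beta>"
    and "orient2k k (cverts VG (Inl ` V) w) (cedges EG endsG (Inl ` V)) (cends endsG (Inl ` V) w)
      (cbeta k (Inl ` V) w \<beta>) D"
    and "\<forall>e\<in>cedges EG endsG (Inl ` V). D0 e = D e"
    and "\<forall>v\<in>V. netflow E ends DH v mod int k = (\<beta> (Inl v) - netflow (EG - Inl ` E) endsG D0 (Inl v)) mod int k"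
  shows "orient2k k VG EG endsG \<beta> (glue E DH D0)"
proof (rule orient2k_lift[OF assms(1-3) glue_agrees[OF assms(4)]], intro ballI)
  fix z :: "'a + 'b" assume "z \<in> Inl ` V"
  then obtain v where "v \<in> V" "z = Inl v"
    by blast
  moreover have "finite E" "finite EG"
    using mgraph_H mgraph by (simp_all add: mgraph_def)
  ultimately show "netflow EG endsG (glue E DH D0) z mod int k = \<beta> z mod int k"
    using netflow_glue[OF _ _ edges_H ends_H] assms(5)
    by (metis add_diff_cancel_left' diff_add_cancel mod_add_right_eq)
qed

lemma strongly_conn_glue:
  assumes "\<forall>e\<in>cedges EG endsG (Inl ` V). D0 e = D e"
    and "reaches (EG - Inl ` E) endsG D0 (Inl y) (Inl x)"
    and "\<forall>v\<in>V. reaches E ends DH x v \<and> reaches E ends DH v y"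
  shows "strongly_conn VG EG endsG (glue E DH D0)"
proof (rule strongly_conn_lift[OF glue_agrees[OF assms(1)]], intro ballI)
  fix a b :: "'a + 'b" assume "a \<in> Inl ` V" "b \<in> Inl ` V"
  then obtain u v where uv: "u \<in> V" "v \<in> V" "a = Inl u" "b = Inl v"
    by blast
  have outside: "\<forall>e\<in>EG - Inl ` E. glue E DH D0 e = D0 e"
    by (simp add: glue_def)
  have "reaches (EG - Inl ` E) endsG (glue E DH D0) (Inl y) (Inl x)"
    by (subst reaches_cong[OF outside]) (rule assms(2))
  then have yx: "reaches EG endsG (glue E DH D0) (Inl y) (Inl x)"
    by (rule reaches_mono) blast
  have uy: "reaches EG endsG (glue E DH D0) (Inl u) (Inl y)"
    and xv: "reaches EG endsG (glue E DH D0) (Inl x) (Inl v)"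
    using reaches_glue[OF edges_H ends_H] assms(3) uv by blast+
  show "reaches EG endsG (glue E DH D0) a b"
    unfolding uv(3,4) by (rule reaches_trans[OF reaches_trans[OF uy yx] xv])
qed

lemma extend_contracted_orientation:
  assumes "odd k"
    and paths: "\<forall>x\<in>V. \<forall>y\<in>V. x \<noteq> y \<longrightarrow> (\<exists>P. ham_path V E ends x y P \<and> SZ k V (E - P) ends)"
    and nice: "x0 \<in> V" "y0 \<in> V" "x0 \<noteq> y0" "(Inl x0, Inl y0) \<in> (adj (EG - Inl ` E) endsG)\<^sup>*"
    and pc: "pc_boundary k VG EG endsG \<beta>"
    and OR: "orient2k k (cverts VG (Inl ` V) w) (cedges EG endsG (Inl ` V)) (cends endsG (Inl ` V) w)
      (cbeta k (Inl ` V) w \<beta>) D"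
  obtains D' where "\<forall>e\<in>cedges EG endsG (Inl ` V). D' e = D e"
    "orient2k k VG EG endsG \<beta> D'" "strongly_conn VG EG endsG D'"
proof -
  obtain a b D0 where ab: "a \<in> Inl ` V" "b \<in> Inl ` V" "a \<noteq> b"
    and D0: "\<forall>e\<in>cedges EG endsG (Inl ` V). D0 e = D e"
    and return: "reaches (EG - Inl ` E) endsG D0 a b"
    using return_orientation[OF edges_H_inside _ _ _ nice(4)] nice(1-3) by blast
  then obtain x y where xy: "a = Inl y" "b = Inl x" "x \<in> V" "y \<in> V" "x \<noteq> y"
    by blast
  then obtain P where P: "ham_path V E ends x y P" "SZ k V (E - P) ends"
    using paths by blast
  define \<gamma> where "\<gamma> v = \<beta> (Inl v) - netflow (EG - Inl ` E) endsG D0 (Inl v)" for v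
  have "(\<Sum>v\<in>V. \<gamma> v) = (\<Sum>z\<in>Inl ` V. \<beta> z - netflow (EG - Inl ` E) endsG D0 z)"
    by (simp add: \<gamma>_def sum.reindex inj_on_def)
  then have "(\<Sum>v\<in>V. \<gamma> v) mod int k = 0"
    using sum_boundary_contracted[OF OR D0 edges_H_inside] mod_eq_if_mod_double_eq[of _ k 0] by simp
  then obtain DH where DH: "\<forall>v\<in>V. netflow E ends DH v mod int k = \<gamma> v mod int k"
    "\<forall>v\<in>V. reaches E ends DH x v \<and> reaches E ends DH v y"
    by (rule ham_path_orientation[OF mgraph_H P])
  show thesis
  proof (rule that)
    show "\<forall>e\<in>cedges EG endsG (Inl ` V). glue E DH D0 e = D e"
      by (rule glue_agrees[OF D0])
    show "orient2k k VG EG endsG \<beta> (glue E DH D0)"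
      using orient2k_glue[OF assms(1) pc OR D0] DH(1) by (simp add: \<gamma>_def)
    show "strongly_conn VG EG endsG (glue E DH D0)"
      using strongly_conn_glue[OF D0 _ DH(2)] return xy(1,2) by simp
  qed
qed

end

lemma WC_if_ham_paths:
  fixes V :: "'a set" and E :: "'e set"
  assumes "odd k" "mgraph V E ends"
    and "\<forall>x\<in>V. \<forall>y\<in>V. x \<noteq> y \<longrightarrow> (\<exists>P. ham_path V E ends x y P \<and> SZ k V (E - P) ends)"
  shows "WC k V E ends"
  unfolding WC_def Let_def
proof (intro allI impI, elim conjE exE bexE)
  fix VG :: "('a + nat) set" and EG :: "('e + nat) set" and endsG \<beta> D x y
  assume G: "mgraph VG EG endsG" "Inl ` V \<subseteq> VG" "Inl ` E \<subseteq> EG"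
    "\<forall>e\<in>E. endsG (Inl e) = map_prod Inl Inl (ends e)"
    and nice: "x \<in> V" "y \<in> V" "x \<noteq> y" "(Inl x, Inl y) \<in> (adj (EG - Inl ` E) endsG)\<^sup>*"
    and pc: "pc_boundary k VG EG endsG \<beta>"
    and OR: "orient2k k (cverts VG (Inl ` V) (Inl (SOME x. x \<in> V))) (cedges EG endsG (Inl ` V))
        (cends endsG (Inl ` V) (Inl (SOME x. x \<in> V))) (cbeta k (Inl ` V) (Inl (SOME x. x \<in> V)) \<beta>) D"
    and SC: "strongly_conn (cverts VG (Inl ` V) (Inl (SOME x. x \<in> V))) (cedges EG endsG (Inl ` V))
        (cends endsG (Inl ` V) (Inl (SOME x. x \<in> V))) D"
  have "Inl (SOME x. x \<in> V) \<in> Inl ` V"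
    using someI[of "\<lambda>x. x \<in> V", OF nice(1)] by blast
  then interpret embedded_contraction VG EG endsG V "Inl (SOME x. x \<in> V)" D E ends
    using G SC assms(2) by unfold_locales auto
  obtain D' where "\<forall>e\<in>cedges EG endsG (Inl ` V). D' e = D e"
    "orient2k k VG EG endsG \<beta> D'" "strongly_conn VG EG endsG D'"
    by (rule extend_contracted_orientation[OF assms(1,3) nice pc OR])
  then show "\<exists>D'. (\<forall>e\<in>cedges EG endsG (Inl ` V). D' e = D e) \<and>
      orient2k k VG EG endsG \<beta> D' \<and> strongly_conn VG EG endsG D'"
    by blast
qed

lemma WC_if_at_most_one_vertex:
  assumes "\<forall>x\<in>V. \<forall>y\<in>V. x = y"
  shows "WC k V E ends"
  unfolding WC_def by (intro allI impI) (use assms in blast)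

theorem proposition2p12:
  fixes V :: "'a set" and E :: "'e set" and ends :: "'e \<Rightarrow> 'a \<times> 'a" and k :: nat
  assumes "0 < k" and "mgraph V E ends"
  shows "((\<exists>C. ham_cycle V E ends C \<and> SZ k V (E - C) ends) \<longrightarrow> SC k V E ends) \<and>
         ((\<forall>x\<in>V. \<forall>y\<in>V. x \<noteq> y \<longrightarrow> (\<exists>P. ham_path V E ends x y P \<and> SZ k V (E - P) ends))
            \<longrightarrow> WC k V E ends)"
proof (cases "odd k")
  case True
  then show ?thesis
    using SC_if_ham_cycle WC_if_ham_paths assms(2) by blast
next
  case False
  \<comment> \<open>this case includes k = 0\<close>
  then have "even k"
    by simp
  have trivial: "x = y" if "x \<in> V" "y \<in> V" "SZ k V (E - P) ends" for x y P
    using SZ_even_at_most_one_vertex[OF \<open>even k\<close> mgraph_Diff[OF assms(2)] that(3,1,2)] .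
  have "\<not> (ham_cycle V E ends C \<and> SZ k V (E - C) ends)" for C
    using ham_cycle_has_two_vertices trivial by metis
  moreover have "WC k V E ends"
    if "\<forall>x\<in>V. \<forall>y\<in>V. x \<noteq> y \<longrightarrow> (\<exists>P. ham_path V E ends x y P \<and> SZ k V (E - P) ends)"
    using that trivial by (intro WC_if_at_most_one_vertex) blast
  ultimately show ?thesis
    by blast
qed

end
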